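(* Let $h:(\mathbb{R}^n,0)\to(\mathbb{R}^n,0)$ be a Lipschitz homeomorphism germ such that $c_1\|x\|\le\|h(x)\|\le c_2\|x\|$ for some constants $c_1,c_2>0$ and all $x$ in a neighbourhood of $0$. Then $h$ is an (SSP) map if and only if for every semiline $\ell$ the restriction $h|_\ell$ is an (SSP) map.
   Context: A semiline is a set $\{ta:t\ge0\}$ with $a\in S^{n-1}$. For a set-germ $A\subset\mathbb{R}^k$ at $0$ with $0\in\overline A$, $D(A)=\{a\in S^{k-1}:\exists\, x_i\in A\setminus\{0\},\ x_i\to0,\ x_i/\|x_i\|\to a\}$. For sequences, $\|u_m\|\ll\|v_m\|,\|w_m\|$ means $\|u_m\|/\|v_m\|\to0$ and $\|u_m\|/\|w_m\|\to0$. $A$ satisfies condition (SSP) if for every sequence $a_m\in\mathbb{R}^k$ tending to $0$ with $\lim a_m/\|a_m\|\in D(A)$ there is a sequence $b_m\in A$ with $\|a_m-b_m\|\ll\|a_m\|,\|b_m\|$. A map germ $f:(S,0)\to(\mathbb{R}^n,0)$ defined on a set $S\subset\mathbb{R}^n$ with $0\in\overline S$ is an (SSP) map if its graph $\{(x,f(x)):x\in S\}\subset\mathbb{R}^n\times\mathbb{R}^n$ satisfies condition (SSP) at $(0,0)$. *)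

theory Defs
  imports "HOL-Analysis.Analysis"
begin

definition semiline :: "'a::real_normed_vector \<Rightarrow> 'a set" where
  "semiline a = {t *\<^sub>R a | t. t \<ge> 0}"

definition limit_directions :: "'b::real_normed_vector set \<Rightarrow> 'b set" where
  "limit_directions A = {a. norm a = 1 \<and>
     (\<exists>x::nat \<Rightarrow> 'b. (\<forall>i. x i \<in> A - {0}) \<and> x \<longlonglongrightarrow> 0 \<and>
        (\<lambda>i. x i /\<^sub>R norm (x i)) \<longlonglongrightarrow> a)}"

definition SSP :: "'b::real_normed_vector set \<Rightarrow> bool" where
  "SSP A \<longleftrightarrow>
     (\<forall>a::nat \<Rightarrow> 'b. a \<longlonglongrightarrow> 0 \<and>
        (\<exists>d \<in> limit_directions A. (\<lambda>m. a m /\<^sub>R norm (a m)) \<longlonglongrightarrow> d)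
      \<longrightarrow> (\<exists>b::nat \<Rightarrow> 'b. (\<forall>m. b m \<in> A) \<and>
             (\<lambda>m. norm (a m - b m) / norm (a m)) \<longlonglongrightarrow> 0 \<and>
             (\<lambda>m. norm (a m - b m) / norm (b m)) \<longlonglongrightarrow> 0))"

definition SSP_map :: "('a::real_normed_vector \<Rightarrow> 'c::real_normed_vector) \<Rightarrow> 'a set \<Rightarrow> bool" where
  "SSP_map f S \<longleftrightarrow> SSP {(x, f x) | x. x \<in> S}"

end

theory Submission
  imports Defs
begin

text \<open>If graph points \<open>(x\<^sub>m, h x\<^sub>m) \<rightarrow> 0\<close> have limit direction \<open>d\<close>, then \<open>fst d \<noteq> 0\<close> because
  \<open>\<parallel>h x\<parallel> \<le> L \<parallel>x\<parallel>\<close>, and replacing \<open>x\<^sub>m\<close> by the point \<open>\<parallel>x\<^sub>m\<parallel> sgn (fst d)\<close> of the semiline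
  through \<open>fst d\<close> moves the graph point by \<open>o(\<parallel>(x\<^sub>m, h x\<^sub>m)\<parallel>)\<close>, by the Lipschitz condition.
  So every limit direction of the graph is one of its restriction to a semiline, and graph
  sequences with that direction can be pushed onto the semiline. Since
  \<open>\<parallel>u\<^sub>m - v\<^sub>m\<parallel> \<ll> \<parallel>u\<^sub>m\<parallel>\<close> is an equivalence relation on eventually nonzero sequences that preserves
  limits and limit directions, condition (SSP) passes between the graph and its restrictions.\<close>

definition graph_on :: "('a \<Rightarrow> 'b) \<Rightarrow> 'a set \<Rightarrow> ('a \<times> 'b) set" where
  "graph_on f S = {(x, f x) | x. x \<in> S}"

lemma SSP_map_iff_graph_on: "SSP_map f S \<longleftrightarrow> SSP (graph_on f S)"
  unfolding SSP_map_def graph_on_def ..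

lemma graph_on_mono: "S \<subseteq> T \<Longrightarrow> graph_on f S \<subseteq> graph_on f T"
  unfolding graph_on_def by blast

lemma zero_mem_graph_on:
  "(0::'a::zero) \<in> S \<Longrightarrow> f 0 = (0::'b::zero) \<Longrightarrow> 0 \<in> graph_on f S"
  unfolding graph_on_def zero_prod_def by force

definition rel_close :: "(nat \<Rightarrow> 'b::real_normed_vector) \<Rightarrow> (nat \<Rightarrow> 'b) \<Rightarrow> bool" where
  "rel_close p q \<longleftrightarrow> (\<lambda>m. norm (p m - q m) / norm (p m)) \<longlonglongrightarrow> 0"

lemma eventually_nonzero_if_direction:
  fixes p :: "nat \<Rightarrow> 'b::real_normed_vector"
  assumes "(\<lambda>m. p m /\<^sub>R norm (p m)) \<longlonglongrightarrow> d" "norm d = 1"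
  shows "eventually (\<lambda>m. p m \<noteq> 0) sequentially"
proof -
  have "(\<lambda>m. norm (p m /\<^sub>R norm (p m))) \<longlonglongrightarrow> 1"
    using tendsto_norm[OF assms(1)] assms(2) by simp
  then have "eventually (\<lambda>m. norm (p m /\<^sub>R norm (p m)) > 0) sequentially"
    by (rule order_tendstoD) simp
  then show ?thesis by eventually_elim auto
qed

lemma rel_close_norm_ratio:
  fixes p q :: "nat \<Rightarrow> 'b::real_normed_vector"
  assumes "rel_close p q" "eventually (\<lambda>m. p m \<noteq> 0) sequentially"
  shows "(\<lambda>m. norm (q m) / norm (p m)) \<longlonglongrightarrow> 1"
proof -
  have "(\<lambda>m. norm (q m) / norm (p m) - 1) \<longlonglongrightarrow> 0"
  proof (rule Lim_null_comparison)
    show "eventually (\<lambda>m. norm (norm (q m) / norm (p m) - 1) \<le> norm (p m - q m) / norm (p m))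
      sequentially"
      using assms(2)
    proof eventually_elim
      case (elim m)
      then have "norm (q m) / norm (p m) - 1 = (norm (q m) - norm (p m)) / norm (p m)"
        by (simp add: field_simps)
      moreover have "\<bar>norm (q m) - norm (p m)\<bar> \<le> norm (p m - q m)"
        by (metis norm_minus_commute norm_triangle_ineq3)
      ultimately show ?case by (simp add: abs_div divide_right_mono)
    qed
    show "(\<lambda>m. norm (p m - q m) / norm (p m)) \<longlonglongrightarrow> 0"
      using assms(1) unfolding rel_close_def .
  qed
  then show ?thesis by (simp only: LIM_zero_iff)
qed

lemma rel_close_eventually_nonzero:
  fixes p q :: "nat \<Rightarrow> 'b::real_normed_vector"
  assumes "rel_close p q" "eventually (\<lambda>m. p m \<noteq> 0) sequentially"
  shows "eventually (\<lambda>m. q m \<noteq> 0) sequentially"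
proof -
  have "eventually (\<lambda>m. norm (q m) / norm (p m) > 0) sequentially"
    using rel_close_norm_ratio[OF assms] by (rule order_tendstoD) simp
  then show ?thesis by eventually_elim auto
qed

lemma rel_close_sym:
  fixes p q :: "nat \<Rightarrow> 'b::real_normed_vector"
  assumes "rel_close p q" "eventually (\<lambda>m. p m \<noteq> 0) sequentially"
  shows "rel_close q p"
proof -
  have "(\<lambda>m. (norm (p m - q m) / norm (p m)) / (norm (q m) / norm (p m))) \<longlonglongrightarrow> 0 / 1"
    using assms rel_close_norm_ratio unfolding rel_close_def by (intro tendsto_divide) auto
  moreover have "eventually (\<lambda>m. (norm (p m - q m) / norm (p m)) / (norm (q m) / norm (p m))
      = norm (q m - p m) / norm (q m)) sequentially"
    using assms(2) by eventually_elim (simp add: norm_minus_commute)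
  ultimately show ?thesis
    unfolding rel_close_def using Lim_transform_eventually by fastforce
qed

lemma rel_close_trans:
  fixes p q r :: "nat \<Rightarrow> 'b::real_normed_vector"
  assumes pq: "rel_close p q" and qr: "rel_close q r"
    and p: "eventually (\<lambda>m. p m \<noteq> 0) sequentially"
  shows "rel_close p r"
  unfolding rel_close_def
proof (rule Lim_null_comparison)
  show "eventually (\<lambda>m. norm (norm (p m - r m) / norm (p m)) \<le>
     norm (p m - q m) / norm (p m) + (norm (q m - r m) / norm (q m)) * (norm (q m) / norm (p m)))
     sequentially"
    using p rel_close_eventually_nonzero[OF pq p]
  proof eventually_elim
    case (elim m)
    have "norm (p m - r m) \<le> norm (p m - q m) + norm (q m - r m)"
      using norm_triangle_ineq[of "p m - q m" "q m - r m"] by simp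
    then show ?case using elim by (simp add: add_divide_distrib[symmetric] divide_right_mono)
  qed
  show "(\<lambda>m. norm (p m - q m) / norm (p m) + (norm (q m - r m) / norm (q m)) * (norm (q m) / norm (p m)))
      \<longlonglongrightarrow> 0"
    using tendsto_add[OF pq[unfolded rel_close_def]
        tendsto_mult[OF qr[unfolded rel_close_def] rel_close_norm_ratio[OF pq p]]]
    by simp
qed

lemma rel_close_direction:
  fixes p q :: "nat \<Rightarrow> 'b::real_normed_vector"
  assumes pq: "rel_close p q" and p: "eventually (\<lambda>m. p m \<noteq> 0) sequentially"
    and pd: "(\<lambda>m. p m /\<^sub>R norm (p m)) \<longlonglongrightarrow> d"
  shows "(\<lambda>m. q m /\<^sub>R norm (q m)) \<longlonglongrightarrow> d"
proof -
  have qp: "rel_close q p" using rel_close_sym[OF pq p] .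
  have q: "eventually (\<lambda>m. q m \<noteq> 0) sequentially" using rel_close_eventually_nonzero[OF pq p] .
  have "(\<lambda>m. q m /\<^sub>R norm (q m) - p m /\<^sub>R norm (p m)) \<longlonglongrightarrow> 0"
  proof (rule Lim_null_comparison)
    show "eventually (\<lambda>m. norm (q m /\<^sub>R norm (q m) - p m /\<^sub>R norm (p m)) \<le>
      norm (q m - p m) / norm (q m) + \<bar>norm (p m) / norm (q m) - 1\<bar>) sequentially"
      using p q
    proof eventually_elim
      case (elim m)
      have "q m /\<^sub>R norm (q m) - p m /\<^sub>R norm (p m) =
          (q m - p m) /\<^sub>R norm (q m) + (1 / norm (q m) - 1 / norm (p m)) *\<^sub>R p m"
        by (simp add: scaleR_diff_left scaleR_diff_right divide_inverse_commute)
      moreover have "norm ((1 / norm (q m) - 1 / norm (p m)) *\<^sub>R p m)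
          = \<bar>norm (p m) / norm (q m) - 1\<bar>"
        using elim by (simp add: abs_mult[symmetric] field_simps)
      ultimately show ?case
        using norm_triangle_ineq[of "(q m - p m) /\<^sub>R norm (q m)"
            "(1 / norm (q m) - 1 / norm (p m)) *\<^sub>R p m"]
        by (simp add: divide_inverse_commute)
    qed
    show "(\<lambda>m. norm (q m - p m) / norm (q m) + \<bar>norm (p m) / norm (q m) - 1\<bar>) \<longlonglongrightarrow> 0"
      using tendsto_add[OF qp[unfolded rel_close_def]
          tendsto_rabs[OF LIM_zero[OF rel_close_norm_ratio[OF qp q]]]]
      by simp
  qed
  from tendsto_add[OF this pd] show ?thesis by simp
qed

lemma rel_close_tendsto_zero:
  fixes p q :: "nat \<Rightarrow> 'b::real_normed_vector"
  assumes pq: "rel_close p q" and p: "eventually (\<lambda>m. p m \<noteq> 0) sequentially"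
    and p0: "p \<longlonglongrightarrow> 0"
  shows "q \<longlonglongrightarrow> 0"
proof (rule Lim_null_comparison)
  show "eventually (\<lambda>m. norm (q m) \<le> norm (p m) + (norm (p m - q m) / norm (p m)) * norm (p m))
      sequentially"
    using p by eventually_elim (use norm_triangle_ineq4[of "p m" "p m - q m" for m] in simp)
  show "(\<lambda>m. norm (p m) + (norm (p m - q m) / norm (p m)) * norm (p m)) \<longlonglongrightarrow> 0"
    using tendsto_add[OF tendsto_norm_zero[OF p0]
        tendsto_mult[OF pq[unfolded rel_close_def] tendsto_norm_zero[OF p0]]]
    by simp
qed

lemma limit_directions_mono: "A \<subseteq> B \<Longrightarrow> limit_directions A \<subseteq> limit_directions B"
  unfolding limit_directions_def by blast

lemma limit_directionsI_eventually:
  fixes q :: "nat \<Rightarrow> 'b::real_normed_vector"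
  assumes "eventually (\<lambda>m. q m \<in> A - {0}) sequentially" and "q \<longlonglongrightarrow> 0"
    and "(\<lambda>m. q m /\<^sub>R norm (q m)) \<longlonglongrightarrow> d" and "norm d = 1"
  shows "d \<in> limit_directions A"
proof -
  obtain k where k: "\<And>m. m \<ge> k \<Longrightarrow> q m \<in> A - {0}"
    using assms(1) unfolding eventually_sequentially by blast
  have "(\<lambda>m. q (m + k)) \<longlonglongrightarrow> 0" "(\<lambda>m. q (m + k) /\<^sub>R norm (q (m + k))) \<longlonglongrightarrow> d"
    using LIMSEQ_ignore_initial_segment assms(2,3) by blast+
  with k \<open>norm d = 1\<close> show ?thesis
    unfolding limit_directions_def by (intro CollectI conjI exI[of _ "\<lambda>m. q (m + k)"]) auto
qed

text \<open>The requirement \<open>\<parallel>a\<^sub>m - b\<^sub>m\<parallel> \<ll> \<parallel>b\<^sub>m\<parallel>\<close> in (SSP) is redundant: a sequence with a unit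
  limit direction is eventually nonzero, so \<open>rel_close\<close> is symmetric for it.\<close>
lemma SSP_iff_rel_close:
  "SSP A \<longleftrightarrow> (\<forall>a. a \<longlonglongrightarrow> 0 \<and> (\<exists>d \<in> limit_directions A. (\<lambda>m. a m /\<^sub>R norm (a m)) \<longlonglongrightarrow> d)
     \<longrightarrow> (\<exists>b. (\<forall>m. b m \<in> A) \<and> rel_close a b))"
proof -
  have swap: "(\<lambda>m. norm (a m - b m) / norm (b m)) \<longlonglongrightarrow> 0 \<longleftrightarrow> rel_close b a"
    for a b :: "nat \<Rightarrow> 'a"
    unfolding rel_close_def by (simp add: norm_minus_commute)
  have sym: "rel_close b a"
    if "rel_close a b" "d \<in> limit_directions A" "(\<lambda>m. a m /\<^sub>R norm (a m)) \<longlonglongrightarrow> d" for a b d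
  proof (rule rel_close_sym[OF that(1)])
    show "eventually (\<lambda>m. a m \<noteq> 0) sequentially"
      using that(2,3) eventually_nonzero_if_direction unfolding limit_directions_def by blast
  qed
  show ?thesis
    unfolding SSP_def swap rel_close_def[symmetric] using sym by blast
qed

lemma zero_mem_semiline: "0 \<in> semiline a"
  unfolding semiline_def by force

lemma scaleR_mem_semiline: "0 \<le> t \<Longrightarrow> t *\<^sub>R a \<in> semiline a"
  unfolding semiline_def by blast

lemma cone_semiline: "cone (semiline a)"
  unfolding cone_def semiline_def by (auto intro!: exI[of _ "_ * _"] zero_le_mult_iff[THEN iffD2])

lemma closed_semiline:
  fixes a :: "'a::real_inner"
  shows "closed (semiline a)"
proof -
  have "semiline a = {x. x = (x \<bullet> (a /\<^sub>R (a \<bullet> a))) *\<^sub>R a} \<inter> {x. 0 \<le> x \<bullet> a}"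
    unfolding semiline_def by (auto simp: inner_commute)
  moreover have "closed ({x. x = (x \<bullet> (a /\<^sub>R (a \<bullet> a))) *\<^sub>R a} \<inter> {x. 0 \<le> x \<bullet> a})"
    by (intro closed_Int closed_Collect_eq closed_Collect_le continuous_intros)
  ultimately show ?thesis by simp
qed

lemma sgn_eq_if_mem_semiline:
  assumes "x \<in> semiline a" "x \<noteq> 0" "norm a = 1"
  shows "sgn x = a"
proof -
  obtain t where "0 \<le> t" "x = t *\<^sub>R a"
    using assms(1) unfolding semiline_def by blast
  with assms(2,3) show ?thesis
    by (auto simp: sgn_scaleR sgn_div_norm)
qed

lemma fst_limit_direction_mem_cone:
  fixes A :: "('a::real_normed_vector \<times> 'b::real_normed_vector) set"
  assumes "closed S" "cone S" "fst ` A \<subseteq> S" "d \<in> limit_directions A"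
  shows "fst d \<in> S"
proof -
  obtain w where w: "\<And>i. w i \<in> A" and wd: "(\<lambda>i. w i /\<^sub>R norm (w i)) \<longlonglongrightarrow> d"
    using assms(4) unfolding limit_directions_def by blast
  have "fst (w i /\<^sub>R norm (w i)) \<in> S" for i
    using assms(2,3) w[of i] unfolding cone_def by auto
  then show ?thesis
    using closed_sequentially[OF assms(1) _ tendsto_fst[OF wd]] by blast
qed

lemma fst_limit_direction_nonzero:
  fixes A :: "('a::real_normed_vector \<times> 'b::real_normed_vector) set"
  assumes bound: "\<And>u v. (u, v) \<in> A \<Longrightarrow> norm v \<le> C * norm u" and "0 \<le> C"
    and "d \<in> limit_directions A"
  shows "fst d \<noteq> 0"
proof -
  obtain w where w: "\<And>m. w m \<in> A - {0}" and dir: "(\<lambda>m. w m /\<^sub>R norm (w m)) \<longlonglongrightarrow> d"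
    using assms(3) unfolding limit_directions_def by blast
  have "(\<lambda>m. norm (fst (w m)) / norm (w m)) \<longlonglongrightarrow> norm (fst d)"
    using tendsto_norm[OF tendsto_fst[OF dir]] by (simp add: divide_inverse_commute)
  moreover have "1 / (1 + C) \<le> norm (fst (w m)) / norm (w m)" for m
  proof -
    have "norm (w m) \<le> norm (fst (w m)) + norm (snd (w m))"
      using norm_Pair_le[of "fst (w m)" "snd (w m)"] by simp
    also have "\<dots> \<le> (1 + C) * norm (fst (w m))"
      using bound[of "fst (w m)" "snd (w m)"] w[of m] by (simp add: algebra_simps)
    finally show ?thesis using w[of m] \<open>0 \<le> C\<close> by (simp add: field_simps)
  qed
  ultimately have "1 / (1 + C) \<le> norm (fst d)"
    by (intro tendsto_lowerbound) auto
  then show ?thesis using \<open>0 \<le> C\<close> by auto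
qed

lemma radial_deviation_tendsto_zero:
  fixes u :: "nat \<Rightarrow> 'a::real_normed_vector" and r :: "nat \<Rightarrow> real"
  assumes lim: "(\<lambda>m. u m /\<^sub>R r m) \<longlonglongrightarrow> e" and r: "\<And>m. 0 \<le> r m"
  shows "(\<lambda>m. norm (u m - norm (u m) *\<^sub>R sgn e) / r m) \<longlonglongrightarrow> 0"
proof -
  have norm_div: "norm (w /\<^sub>R r m) = norm w / r m" for w m
    using r[of m] by (simp add: divide_inverse_commute)
  have "(\<lambda>m. u m /\<^sub>R r m - norm (u m /\<^sub>R r m) *\<^sub>R sgn e) \<longlonglongrightarrow> e - norm e *\<^sub>R sgn e"
    by (intro tendsto_intros lim)
  moreover have "e - norm e *\<^sub>R sgn e = 0"
    by (cases "e = 0") (simp_all add: sgn_div_norm)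
  moreover have "u m /\<^sub>R r m - norm (u m /\<^sub>R r m) *\<^sub>R sgn e = (u m - norm (u m) *\<^sub>R sgn e) /\<^sub>R r m"
    for m
    using r[of m] by (simp add: norm_div scaleR_diff_right divide_inverse_commute)
  ultimately have "(\<lambda>m. (u m - norm (u m) *\<^sub>R sgn e) /\<^sub>R r m) \<longlonglongrightarrow> 0"
    by simp
  from tendsto_norm_zero[OF this] show ?thesis
    by (simp only: norm_div)
qed

lemma fst_limit_direction_graph_on_nonzero:
  fixes h :: "'a::real_normed_vector \<Rightarrow> 'b::real_normed_vector"
  assumes "L-lipschitz_on U h" "0 \<in> U" "h 0 = 0" "d \<in> limit_directions (graph_on h U)"
  shows "fst d \<noteq> 0"
proof (rule fst_limit_direction_nonzero[OF _ lipschitz_on_nonneg[OF assms(1)] assms(4)])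
  show "norm v \<le> L * norm u" if "(u, v) \<in> graph_on h U" for u v
    using that lipschitz_onD[OF assms(1) _ assms(2), of u] assms(3)
    unfolding graph_on_def by (auto simp: dist_norm)
qed

lemma lipschitz_on_graph_dist:
  fixes h :: "'a::real_normed_vector \<Rightarrow> 'b::real_normed_vector"
  assumes "L-lipschitz_on U h" "x \<in> U" "y \<in> U"
  shows "dist (x, h x) (y, h y) \<le> (1 + L) * dist x y"
proof -
  have "dist (x, h x) (y, h y) \<le> dist x y + dist (h x) (h y)"
    using norm_Pair_le[of "x - y" "h x - h y"] by (simp add: dist_norm)
  also have "dist (h x) (h y) \<le> L * dist x y"
    using lipschitz_onD[OF assms] .
  finally show ?thesis by (simp add: algebra_simps)
qed

text \<open>Moving \<open>x\<^sub>m\<close> radially onto the ray spanned by the first component of the limit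
  direction costs \<open>o(\<parallel>(x\<^sub>m, h x\<^sub>m)\<parallel>)\<close>, and the Lipschitz condition carries this over to the graph.\<close>
lemma graph_sequence_close_to_ray:
  fixes h :: "'a::real_normed_vector \<Rightarrow> 'b::real_normed_vector"
  assumes "open U" "0 \<in> U" "h 0 = 0" and lip: "L-lipschitz_on U h"
    and c: "\<And>m. c m \<in> graph_on h U" and c0: "c \<longlonglongrightarrow> 0"
    and dir: "(\<lambda>m. c m /\<^sub>R norm (c m)) \<longlonglongrightarrow> d"
  obtains b where "\<And>m. b m \<in> graph_on h (semiline (sgn (fst d)) \<inter> U)" and "rel_close c b"
proof -
  define x where "x m = fst (c m)" for m
  have c_eq: "c m = (x m, h (x m))" and xU: "x m \<in> U" for m
    using c[of m] unfolding x_def graph_on_def by auto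
  define y where "y m = norm (x m) *\<^sub>R sgn (fst d)" for m
  define b where "b m = (if y m \<in> U then (y m, h (y m)) else 0)" for m
  have "b m \<in> graph_on h (semiline (sgn (fst d)) \<inter> U)" for m
  proof (cases "y m \<in> U")
    case True
    then show ?thesis
      using scaleR_mem_semiline[of "norm (x m)"] unfolding b_def y_def graph_on_def by auto
  next
    case False
    have "0 \<in> graph_on h (semiline (sgn (fst d)) \<inter> U)"
      by (rule zero_mem_graph_on) (simp_all add: zero_mem_semiline \<open>0 \<in> U\<close> \<open>h 0 = 0\<close>)
    with False show ?thesis
      unfolding b_def by simp
  qed
  moreover have "rel_close c b"
    unfolding rel_close_def
  proof (rule Lim_null_comparison)
    have "(\<lambda>m. norm (y m)) \<longlonglongrightarrow> 0"
      using tendsto_mult_right_zero[OF tendsto_norm_zero[OF tendsto_fst[OF c0, unfolded fst_zero]],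
          of "norm (sgn (fst d))"]
      by (simp add: y_def x_def mult.commute)
    then have "eventually (\<lambda>m. y m \<in> U) sequentially"
      by (rule topological_tendstoD[OF tendsto_norm_zero_cancel \<open>open U\<close> \<open>0 \<in> U\<close>])
    then show "eventually (\<lambda>m. norm (norm (c m - b m) / norm (c m))
        \<le> (1 + L) * (norm (x m - y m) / norm (c m))) sequentially"
    proof eventually_elim
      case (elim m)
      then show ?case
        using lipschitz_on_graph_dist[OF lip xU[of m] elim]
        by (simp add: b_def c_eq dist_norm divide_right_mono)
    qed
    have "(\<lambda>m. norm (x m - y m) / norm (c m)) \<longlonglongrightarrow> 0"
      unfolding y_def
      by (rule radial_deviation_tendsto_zero) (use tendsto_fst[OF dir] in \<open>simp_all add: x_def\<close>)
    from tendsto_mult_right_zero[OF this]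
    show "(\<lambda>m. (1 + L) * (norm (x m - y m) / norm (c m))) \<longlonglongrightarrow> 0" .
  qed
  ultimately show ?thesis using that by blast
qed

lemma limit_direction_graph_on_semiline:
  fixes h :: "'a::real_normed_vector \<Rightarrow> 'b::real_normed_vector"
  assumes "open U" "0 \<in> U" "h 0 = 0" "L-lipschitz_on U h"
    and d: "d \<in> limit_directions (graph_on h U)"
  shows "d \<in> limit_directions (graph_on h (semiline (sgn (fst d)) \<inter> U))"
proof -
  obtain w where w: "\<And>m. w m \<in> graph_on h U - {0}" and w0: "w \<longlonglongrightarrow> 0"
    and wd: "(\<lambda>m. w m /\<^sub>R norm (w m)) \<longlonglongrightarrow> d" and "norm d = 1"
    using d unfolding limit_directions_def by blast
  obtain b where b: "\<And>m. b m \<in> graph_on h (semiline (sgn (fst d)) \<inter> U)" and wb: "rel_close w b"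
    using graph_sequence_close_to_ray[OF assms(1-4) _ w0 wd] w by blast
  have w_nz: "eventually (\<lambda>m. w m \<noteq> 0) sequentially"
    using w by simp
  show ?thesis
  proof (rule limit_directionsI_eventually)
    show "eventually (\<lambda>m. b m \<in> graph_on h (semiline (sgn (fst d)) \<inter> U) - {0}) sequentially"
      using rel_close_eventually_nonzero[OF wb w_nz] by eventually_elim (simp add: b)
    show "b \<longlonglongrightarrow> 0"
      using rel_close_tendsto_zero[OF wb w_nz w0] .
    show "(\<lambda>m. b m /\<^sub>R norm (b m)) \<longlonglongrightarrow> d"
      using rel_close_direction[OF wb w_nz wd] .
  qed fact
qed

lemma SSP_graph_on_semiline:
  fixes h :: "'a::real_inner \<Rightarrow> 'b::real_normed_vector"
  assumes "open U" "0 \<in> U" "h 0 = 0" "L-lipschitz_on U h"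
    and SSP: "SSP (graph_on h U)" and "norm a = 1"
  shows "SSP (graph_on h (semiline a \<inter> U))"
  unfolding SSP_iff_rel_close
proof (intro allI impI)
  fix p
  assume "p \<longlonglongrightarrow> 0 \<and> (\<exists>d \<in> limit_directions (graph_on h (semiline a \<inter> U)).
    (\<lambda>m. p m /\<^sub>R norm (p m)) \<longlonglongrightarrow> d)"
  then obtain d where p0: "p \<longlonglongrightarrow> 0" and pd: "(\<lambda>m. p m /\<^sub>R norm (p m)) \<longlonglongrightarrow> d"
    and d: "d \<in> limit_directions (graph_on h (semiline a \<inter> U))"
    by blast
  have p_nz: "eventually (\<lambda>m. p m \<noteq> 0) sequentially"
    using d eventually_nonzero_if_direction[OF pd] unfolding limit_directions_def by blast
  have d_graph: "d \<in> limit_directions (graph_on h U)"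
    using d limit_directions_mono[OF graph_on_mono] by blast
  then obtain c where c: "\<And>m. c m \<in> graph_on h U" and pc: "rel_close p c"
    using SSP p0 pd unfolding SSP_iff_rel_close by blast
  obtain b where b: "\<And>m. b m \<in> graph_on h (semiline (sgn (fst d)) \<inter> U)" and cb: "rel_close c b"
    using graph_sequence_close_to_ray[OF assms(1-4) c rel_close_tendsto_zero[OF pc p_nz p0]
        rel_close_direction[OF pc p_nz pd]] by blast
  have "fst d \<in> semiline a"
    by (rule fst_limit_direction_mem_cone[OF closed_semiline cone_semiline _ d])
      (auto simp: graph_on_def)
  then have "sgn (fst d) = a"
    using sgn_eq_if_mem_semiline fst_limit_direction_graph_on_nonzero[OF assms(4,2,3) d_graph]
      \<open>norm a = 1\<close> by blast
  then show "\<exists>b. (\<forall>m. b m \<in> graph_on h (semiline a \<inter> U)) \<and> rel_close p b"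
    using b rel_close_trans[OF pc cb p_nz] by auto
qed

lemma SSP_graph_on_if_semilines:
  fixes h :: "'a::real_normed_vector \<Rightarrow> 'b::real_normed_vector"
  assumes "open U" "0 \<in> U" "h 0 = 0" "L-lipschitz_on U h"
    and SSP: "\<And>a. norm a = 1 \<Longrightarrow> SSP (graph_on h (semiline a \<inter> U))"
  shows "SSP (graph_on h U)"
  unfolding SSP_iff_rel_close
proof (intro allI impI)
  fix p
  assume "p \<longlonglongrightarrow> 0 \<and> (\<exists>d \<in> limit_directions (graph_on h U). (\<lambda>m. p m /\<^sub>R norm (p m)) \<longlonglongrightarrow> d)"
  then obtain d where p0: "p \<longlonglongrightarrow> 0" and pd: "(\<lambda>m. p m /\<^sub>R norm (p m)) \<longlonglongrightarrow> d"
    and d: "d \<in> limit_directions (graph_on h U)"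
    by blast
  let ?a = "sgn (fst d)"
  have "norm ?a = 1"
    using fst_limit_direction_graph_on_nonzero[OF assms(4,2,3) d] by (simp add: norm_sgn)
  moreover have "d \<in> limit_directions (graph_on h (semiline ?a \<inter> U))"
    using limit_direction_graph_on_semiline[OF assms(1-4) d] .
  ultimately obtain b where "\<And>m. b m \<in> graph_on h (semiline ?a \<inter> U)" and "rel_close p b"
    using SSP p0 pd unfolding SSP_iff_rel_close by blast
  then show "\<exists>b. (\<forall>m. b m \<in> graph_on h U) \<and> rel_close p b"
    using graph_on_mono[of "semiline ?a \<inter> U" U h] by blast
qed

theorem proposition4p9:
  fixes h g :: "'a::euclidean_space \<Rightarrow> 'a" and U :: "'a set" and c1 c2 L :: real
  assumes "open U" and "0 \<in> U" and "h 0 = 0"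
    and "L-lipschitz_on U h"
    and "homeomorphism U (h ` U) h g"
    and "c1 > 0" and "c2 > 0"
    and "\<And>x. x \<in> U \<Longrightarrow> c1 * norm x \<le> norm (h x) \<and> norm (h x) \<le> c2 * norm x"
  shows "SSP_map h U \<longleftrightarrow> (\<forall>a. norm a = 1 \<longrightarrow> SSP_map h (semiline a \<inter> U))"
  unfolding SSP_map_iff_graph_on
  using SSP_graph_on_semiline[OF assms(1-4)] SSP_graph_on_if_semilines[OF assms(1-4)] by blast

end
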